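(* Let $H$ be a graph with at least one edge, and let $m \leq e(H)$ be a positive integer. Then there exists a spanning subgraph $H' \subseteq H$ with exactly $m$ edges satisfying: (S1) $\Delta(H') - \delta(H') \leq \Delta(H) - \delta(H) + 2$; (S2) $\Delta(H \setminus H') \leq (\Delta(H) + 1)\frac{e(H) - m}{e(H)} + 1$.
   Context: $e(H)$ is the number of edges, $\Delta(\cdot)$ and $\delta(\cdot)$ denote maximum and minimum degree. A spanning subgraph has the same vertex set as $H$. $H\setminus H'$ denotes the spanning subgraph of $H$ with edge set $E(H)\setminus E(H')$. *)

theory Defs
  imports Main Complex_Main
begin

text \<open>A finite simple graph is given by a finite vertex set V and an edge set E
of 2-element subsets of V. A spanning subgraph has the same vertex set V and an
edge set E' \<subseteq> E.\<close>

definition graph :: "'a set \<Rightarrow> 'a set set \<Rightarrow> bool" where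
  "graph V E \<longleftrightarrow> finite V \<and> (\<forall>e\<in>E. e \<subseteq> V \<and> card e = 2)"

definition degree :: "'a set set \<Rightarrow> 'a \<Rightarrow> nat" where
  "degree E v = card {e \<in> E. v \<in> e}"

definition max_degree :: "'a set \<Rightarrow> 'a set set \<Rightarrow> nat" where
  "max_degree V E = Max (degree E ` V)"

definition min_degree :: "'a set \<Rightarrow> 'a set set \<Rightarrow> nat" where
  "min_degree V E = Min (degree E ` V)"

end

theory Submission
  imports Defs
begin

text \<open>By Vizing's theorem H has a proper edge colouring with \<Delta>(H) + 1 colours. Delete
  e(H) - m edges: whole colour classes J, chosen so that their mean size is at least
  e(H) / (\<Delta>(H) + 1), together with part of one further class. Every vertex meets at most one
  edge of each class, so the deleted graph has maximum degree at most |J| + 1, which is at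
  most (\<Delta>(H) + 1)(e(H) - m) / e(H) + 1; and in H' every vertex keeps at most
  \<Delta>(H) + 1 - |J| colours and loses at most |J| + 1 edges, which gives (S1).
  Vizing's theorem is proved by the classical fan and Kempe chain recolouring.\<close>

section \<open>Degrees\<close>

lemma degree_mono:
  assumes "F \<subseteq> G" "finite G"
  shows "degree F v \<le> degree G v"
  unfolding degree_def using assms by (intro card_mono) auto

lemma degree_Diff:
  assumes "R \<subseteq> E" "finite E"
  shows "degree E v = degree (E - R) v + degree R v"
proof -
  have "{e\<in>E. v \<in> e} = {e\<in>E - R. v \<in> e} \<union> {e\<in>R. v \<in> e}" using assms(1) by blast
  moreover have "finite R" using assms by (rule finite_subset)
  then have "finite {e\<in>R. v \<in> e}" "finite {e\<in>E - R. v \<in> e}" using assms(2) by simp_all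
  moreover have "{e\<in>E - R. v \<in> e} \<inter> {e\<in>R. v \<in> e} = {}" by blast
  ultimately show ?thesis unfolding degree_def by (simp add: card_Un_disjoint)
qed

lemma degree_Un_le: "degree (A \<union> B) v \<le> degree A v + degree B v"
proof -
  have "{e\<in>A \<union> B. v \<in> e} = {e\<in>A. v \<in> e} \<union> {e\<in>B. v \<in> e}" by blast
  then show ?thesis unfolding degree_def by (simp add: card_Un_le)
qed

lemma graph_finite_edges:
  assumes "graph V E"
  shows "finite E"
proof -
  have "E \<subseteq> Pow V" using assms unfolding graph_def by auto
  then show ?thesis using assms finite_subset unfolding graph_def by blast
qed

lemma degree_le_max_degree:
  assumes "graph V E"
  shows "degree E v \<le> max_degree V E"
proof (cases "v \<in> V")
  case True
  then show ?thesis using assms unfolding max_degree_def graph_def by simp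
next
  case False
  then have "{e\<in>E. v \<in> e} = {}" using assms unfolding graph_def by auto
  then have "degree E v = 0" unfolding degree_def by (simp only: card.empty)
  then show ?thesis by simp
qed

lemma max_degree_le:
  assumes "finite V" "V \<noteq> {}" "\<And>v. v \<in> V \<Longrightarrow> degree F v \<le> b"
  shows "max_degree V F \<le> b"
  using assms unfolding max_degree_def by simp

lemma le_min_degree:
  assumes "finite V" "V \<noteq> {}" "\<And>v. v \<in> V \<Longrightarrow> b \<le> degree F v"
  shows "b \<le> min_degree V F"
  using assms unfolding min_degree_def by simp

lemma min_degree_le:
  assumes "finite V" "v \<in> V"
  shows "min_degree V F \<le> degree F v"
  using assms unfolding min_degree_def by simp

lemma min_degree_Diff_ge:
  assumes "finite V" "V \<noteq> {}" "R \<subseteq> E" "finite E" "\<And>v. degree R v \<le> d"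
  shows "min_degree V E - d \<le> min_degree V (E - R)"
proof (rule le_min_degree[OF assms(1,2)])
  fix v assume "v \<in> V"
  then have "min_degree V E \<le> degree E v" by (rule min_degree_le[OF assms(1)])
  then show "min_degree V E - d \<le> degree (E - R) v"
    using degree_Diff[OF assms(3,4), of v] assms(5)[of v] by linarith
qed

section \<open>Edge colourings\<close>

definition edge_coloring :: "'a set set \<Rightarrow> ('a set \<Rightarrow> nat) \<Rightarrow> nat \<Rightarrow> bool" where
  "edge_coloring F col c \<longleftrightarrow> (\<forall>e\<in>F. col e < c) \<and>
     (\<forall>e\<in>F. \<forall>f\<in>F. e \<noteq> f \<longrightarrow> e \<inter> f \<noteq> {} \<longrightarrow> col e \<noteq> col f)"

definition free_color :: "'a set set \<Rightarrow> ('a set \<Rightarrow> nat) \<Rightarrow> 'a \<Rightarrow> nat \<Rightarrow> bool" where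
  "free_color F col v a \<longleftrightarrow> (\<forall>e\<in>F. v \<in> e \<longrightarrow> col e \<noteq> a)"

lemma edge_coloring_eq:
  assumes "edge_coloring F col c" "e \<in> F" "f \<in> F" "v \<in> e" "v \<in> f" "col e = col f"
  shows "e = f"
  using assms unfolding edge_coloring_def by blast

lemma degree_le_card_colors:
  assumes "edge_coloring E col c" "A \<subseteq> E" "finite K" "\<forall>e\<in>A. v \<in> e \<longrightarrow> col e \<in> K"
  shows "degree A v \<le> card K"
proof -
  have "inj_on col {e\<in>A. v \<in> e}"
    using assms(1,2) unfolding edge_coloring_def inj_on_def by blast
  then show ?thesis
    unfolding degree_def using assms(3,4) by (intro card_inj_on_le) auto
qed

lemma free_color_exists:
  assumes "finite F" "degree F v < c"
  shows "\<exists>a<c. free_color F col v a"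
proof (rule ccontr)
  assume "\<not> ?thesis"
  then have "{0..<c} \<subseteq> col ` {e\<in>F. v \<in> e}" unfolding free_color_def by auto
  then have "card {0..<c} \<le> card (col ` {e\<in>F. v \<in> e})"
    using assms(1) by (intro card_mono) auto
  also have "\<dots> \<le> degree F v"
    unfolding degree_def using assms(1) by (intro card_image_le) simp
  finally show False using assms(2) by simp
qed

lemma edge_with_color_at:
  assumes "\<forall>e\<in>F. card e = 2" "\<not> free_color F col x a"
  shows "\<exists>z. {x, z} \<in> F \<and> col {x, z} = a"
proof -
  obtain e where e: "e \<in> F" "x \<in> e" "col e = a" using assms(2) unfolding free_color_def by blast
  obtain u w where "e = {u, w}" using assms(1) e(1) card_2_iff by metis
  then have "e = {x, if x = u then w else u}" using e(2) by auto
  then show ?thesis using e(1,3) by metis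
qed

section \<open>Components\<close>

definition adj :: "'a set set \<Rightarrow> ('a \<times> 'a) set" where
  "adj H = {(u, w). {u, w} \<in> H}"

definition component :: "'a set set \<Rightarrow> 'a \<Rightarrow> 'a set" where
  "component H u = {v. (u, v) \<in> (adj H)\<^sup>*}"

lemma component_refl: "u \<in> component H u"
  unfolding component_def by simp

lemma component_sym:
  assumes "v \<in> component H u"
  shows "u \<in> component H v"
proof -
  have "sym (adj H)" unfolding adj_def sym_def by (auto simp: insert_commute)
  then show ?thesis using assms sym_rtrancl unfolding component_def sym_def by blast
qed

lemma component_trans: "v \<in> component H u \<Longrightarrow> w \<in> component H v \<Longrightarrow> w \<in> component H u"
  unfolding component_def by (auto intro: rtrancl_trans)

lemma component_closed:
  assumes "\<forall>e\<in>H. card e = 2" "e \<in> H" "v \<in> e" "v \<in> component H u"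
  shows "e \<subseteq> component H u"
proof -
  obtain x y where e: "e = {x, y}" using assms(1,2) card_2_iff by metis
  then have "(x, y) \<in> adj H" "(y, x) \<in> adj H" using assms(2) by (auto simp: adj_def insert_commute)
  then show ?thesis using assms(3,4) e unfolding component_def by (auto intro: rtrancl_into_rtrancl)
qed

lemma finite_Union_card_2:
  assumes "finite H" "\<forall>e\<in>H. card e = 2"
  shows "finite (\<Union>H)"
  using assms by (metis card.infinite finite_Union zero_neq_numeral)

lemma finite_component:
  assumes "finite H" "\<forall>e\<in>H. card e = 2"
  shows "finite (component H u)"
proof -
  have "component H u \<subseteq> insert u (\<Union>H)"
  proof
    fix v assume "v \<in> component H u"
    then have "(u, v) \<in> (adj H)\<^sup>*" unfolding component_def by simp
    then show "v \<in> insert u (\<Union>H)" by (cases rule: rtranclE) (auto simp: adj_def)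
  qed
  then show ?thesis using finite_Union_card_2[OF assms] finite_subset by blast
qed

text \<open>Joining every vertex v \<noteq> u of the component to a neighbour strictly closer to u
  gives pairwise distinct edges inside the component.\<close>

lemma card_component_le:
  assumes "finite H" "\<forall>e\<in>H. card e = 2"
  shows "card (component H u) \<le> card {e\<in>H. e \<subseteq> component H u} + 1"
proof -
  let ?P = "component H u"
  define dist where "dist v = (LEAST n. (u, v) \<in> adj H ^^ n)" for v
  have parent: "\<exists>w. w \<in> ?P \<and> {w, v} \<in> H \<and> dist w < dist v" if "v \<in> ?P - {u}" for v
  proof -
    have "\<exists>n. (u, v) \<in> adj H ^^ n" using that rtrancl_power unfolding component_def by blast
    then have d: "(u, v) \<in> adj H ^^ dist v" unfolding dist_def by (rule LeastI_ex)
    have "dist v \<noteq> 0" using d that by (cases "dist v") auto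
    then obtain n where n: "dist v = Suc n" using not0_implies_Suc by blast
    then obtain w where w: "(u, w) \<in> adj H ^^ n" "(w, v) \<in> adj H" using d by (metis relpow_Suc_E)
    have "dist w \<le> n" unfolding dist_def using w(1) by (rule Least_le)
    moreover have "w \<in> ?P" using w(1) unfolding component_def rtrancl_power by blast
    moreover have "{w, v} \<in> H" using w(2) unfolding adj_def by simp
    ultimately show ?thesis using n by auto
  qed
  then have "\<forall>v\<in>?P - {u}. \<exists>w. w \<in> ?P \<and> {w, v} \<in> H \<and> dist w < dist v" by blast
  from bchoice[OF this] obtain par
    where par: "\<forall>v\<in>?P - {u}. par v \<in> ?P \<and> {par v, v} \<in> H \<and> dist (par v) < dist v"
    by blast
  have "inj_on (\<lambda>v. {par v, v}) (?P - {u})"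
  proof (rule inj_onI)
    fix v w assume vw: "v \<in> ?P - {u}" "w \<in> ?P - {u}" "{par v, v} = {par w, w}"
    show "v = w"
    proof (rule ccontr)
      assume "v \<noteq> w"
      then have "par v = w" "par w = v" using vw(3) by (auto simp: doubleton_eq_iff)
      moreover have "dist (par v) < dist v" "dist (par w) < dist w" using par vw(1,2) by auto
      ultimately show False by simp
    qed
  qed
  moreover have "(\<lambda>v. {par v, v}) ` (?P - {u}) \<subseteq> {e\<in>H. e \<subseteq> ?P}" using par by auto
  ultimately have "card (?P - {u}) \<le> card {e\<in>H. e \<subseteq> ?P}"
    using assms(1) by (intro card_inj_on_le) auto
  moreover have "card ?P = Suc (card (?P - {u}))"
    using card.remove[OF finite_component[OF assms] component_refl] .
  ultimately show ?thesis by simp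
qed

lemma sum_degree_closed:
  assumes "finite H" "\<forall>e\<in>H. card e = 2" "finite P"
    and closed: "\<And>e v. e \<in> H \<Longrightarrow> v \<in> e \<Longrightarrow> v \<in> P \<Longrightarrow> e \<subseteq> P"
  shows "(\<Sum>v\<in>P. degree H v) = 2 * card {e\<in>H. e \<subseteq> P}"
proof -
  let ?HP = "{e\<in>H. e \<subseteq> P}"
  have "(\<Sum>v\<in>P. degree H v) = (\<Sum>v\<in>P. \<Sum>e\<in>?HP. if v \<in> e then 1 else 0)"
  proof (rule sum.cong [OF refl])
    fix v assume "v \<in> P"
    then have "{e\<in>H. v \<in> e} = {e\<in>?HP. v \<in> e}" using closed by blast
    then show "degree H v = (\<Sum>e\<in>?HP. if v \<in> e then 1 else 0)"
      unfolding degree_def using sum.inter_filter[of ?HP "\<lambda>_. 1::nat" "\<lambda>e. v \<in> e"] assms(1)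
      by simp
  qed
  also have "\<dots> = (\<Sum>e\<in>?HP. \<Sum>v\<in>P. if v \<in> e then 1 else 0)"
    by (rule sum.swap)
  also have "\<dots> = (\<Sum>e\<in>?HP. 2)"
  proof (rule sum.cong [OF refl])
    fix e assume e: "e \<in> ?HP"
    then have "{v\<in>P. v \<in> e} = e" by blast
    then show "(\<Sum>v\<in>P. if v \<in> e then 1 else 0) = (2::nat)"
      using e assms(2) sum.inter_filter[OF assms(3), of "\<lambda>_. 1::nat" "\<lambda>v. v \<in> e"] by simp
  qed
  finally show ?thesis by simp
qed

text \<open>A component with c vertices has at least c - 1 edges, while three vertices of
  degree at most one would leave at most c - 3/2 edges.\<close>

lemma component_at_most_two_ends:
  assumes fin: "finite H" and two: "\<forall>e\<in>H. card e = 2" and deg: "\<And>v. degree H v \<le> 2"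
    and in_P: "v1 \<in> component H u" "v2 \<in> component H u"
    and distinct: "v1 \<noteq> v2" "v1 \<noteq> v3" "v2 \<noteq> v3"
    and ends: "degree H v1 \<le> 1" "degree H v2 \<le> 1" "degree H v3 \<le> 1"
  shows "v3 \<notin> component H u"
proof
  let ?P = "component H u"
  let ?S = "{v1, v2, v3}"
  assume "v3 \<in> ?P"
  then have S: "?S \<subseteq> ?P" using in_P by blast
  have finP: "finite ?P" using finite_component[OF fin two] .
  have closed: "\<And>e v. e \<in> H \<Longrightarrow> v \<in> e \<Longrightarrow> v \<in> ?P \<Longrightarrow> e \<subseteq> ?P"
    using component_closed[OF two] by blast
  have "2 * card {e\<in>H. e \<subseteq> ?P} = sum (degree H) ?P"
    using sum_degree_closed[OF fin two finP] closed by simp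
  also have "\<dots> = sum (degree H) ?S + sum (degree H) (?P - ?S)"
    using sum.subset_diff[OF S finP, of "degree H"] by linarith
  also have "\<dots> \<le> 3 + 2 * card (?P - ?S)"
    using ends distinct sum_bounded_above[of "?P - ?S" "degree H" 2] deg by (intro add_mono) auto
  also have "card (?P - ?S) = card ?P - 3"
    using finP S distinct by (simp add: card_Diff_subset)
  finally have "2 * card {e\<in>H. e \<subseteq> ?P} \<le> 3 + 2 * (card ?P - 3)" .
  moreover have "card ?P \<ge> 3" using card_mono[OF finP S] distinct by simp
  ultimately show False using card_component_le[OF fin two, of u] by linarith
qed

section \<open>Kempe chains\<close>

definition kempe_chain :: "'a set set \<Rightarrow> ('a set \<Rightarrow> nat) \<Rightarrow> nat \<Rightarrow> nat \<Rightarrow> 'a \<Rightarrow> 'a set" where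
  "kempe_chain F col a b u = component {e\<in>F. col e = a \<or> col e = b} u"

definition swap_color :: "nat \<Rightarrow> nat \<Rightarrow> nat \<Rightarrow> nat" where
  "swap_color a b d = (if d = a then b else if d = b then a else d)"

definition kempe_swap :: "'a set set \<Rightarrow> ('a set \<Rightarrow> nat) \<Rightarrow> nat \<Rightarrow> nat \<Rightarrow> 'a \<Rightarrow> 'a set \<Rightarrow> nat" where
  "kempe_swap F col a b u e =
     (if e \<in> F \<and> (col e = a \<or> col e = b) \<and> e \<subseteq> kempe_chain F col a b u
      then swap_color a b (col e) else col e)"

lemma swap_color_eq_iff: "swap_color a b x = d \<longleftrightarrow> x = swap_color a b d"
  by (auto simp: swap_color_def)

lemma swap_color_inject: "swap_color a b x = swap_color a b y \<longleftrightarrow> x = y"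
  by (auto simp: swap_color_def)

lemma kempe_swap_outside:
  assumes "v \<notin> kempe_chain F col a b u" "v \<in> e"
  shows "kempe_swap F col a b u e = col e"
  using assms unfolding kempe_swap_def by auto

lemma kempe_swap_inside:
  assumes "\<forall>e\<in>F. card e = 2" "v \<in> kempe_chain F col a b u" "e \<in> F" "v \<in> e"
  shows "kempe_swap F col a b u e = swap_color a b (col e)"
proof (cases "col e = a \<or> col e = b")
  case True
  then have "e \<subseteq> kempe_chain F col a b u"
    using assms component_closed[of "{e\<in>F. col e = a \<or> col e = b}" e v u]
    unfolding kempe_chain_def by auto
  then show ?thesis using True assms(3) unfolding kempe_swap_def by simp
next
  case False
  then show ?thesis unfolding kempe_swap_def swap_color_def by auto
qed

lemma edge_coloring_kempe_swap:
  assumes two: "\<forall>e\<in>F. card e = 2" and col: "edge_coloring F col c" and "a < c" "b < c"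
  shows "edge_coloring F (kempe_swap F col a b u) c"
  unfolding edge_coloring_def
proof (intro conjI ballI impI)
  fix e assume "e \<in> F"
  then show "kempe_swap F col a b u e < c"
    using col assms(3,4) unfolding edge_coloring_def kempe_swap_def swap_color_def by auto
next
  fix e f assume ef: "e \<in> F" "f \<in> F" "e \<noteq> f" "e \<inter> f \<noteq> {}"
  then obtain v where v: "v \<in> e" "v \<in> f" by blast
  have "col e \<noteq> col f" using col ef unfolding edge_coloring_def by blast
  then show "kempe_swap F col a b u e \<noteq> kempe_swap F col a b u f"
    using kempe_swap_inside[OF two _ ef(1) v(1)] kempe_swap_inside[OF two _ ef(2) v(2)]
      kempe_swap_outside[OF _ v(1)] kempe_swap_outside[OF _ v(2)]
    by (cases "v \<in> kempe_chain F col a b u") (simp_all add: swap_color_inject)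
qed

lemma free_color_kempe_swap_outside:
  assumes "v \<notin> kempe_chain F col a b u"
  shows "free_color F (kempe_swap F col a b u) v d \<longleftrightarrow> free_color F col v d"
  using kempe_swap_outside[OF assms] unfolding free_color_def by auto

lemma free_color_kempe_swap_inside:
  assumes "\<forall>e\<in>F. card e = 2" "v \<in> kempe_chain F col a b u"
  shows "free_color F (kempe_swap F col a b u) v d \<longleftrightarrow> free_color F col v (swap_color a b d)"
  using kempe_swap_inside[OF assms] unfolding free_color_def by (auto simp: swap_color_eq_iff)

lemma kempe_chain_at_most_two_ends:
  assumes fin: "finite F" and two: "\<forall>e\<in>F. card e = 2" and col: "edge_coloring F col c"
    and in_chain: "v1 \<in> kempe_chain F col a b u" "v2 \<in> kempe_chain F col a b u"
    and distinct: "v1 \<noteq> v2" "v1 \<noteq> v3" "v2 \<noteq> v3"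
    and free: "\<forall>v\<in>{v1, v2, v3}. free_color F col v a \<or> free_color F col v b"
  shows "v3 \<notin> kempe_chain F col a b u"
proof -
  let ?H = "{e\<in>F. col e = a \<or> col e = b}"
  have deg: "degree ?H v \<le> card {a, b}" for v
    by (rule degree_le_card_colors[OF col]) auto
  have "card {a, b} \<le> 2" by (simp add: card_insert_if)
  with deg have deg2: "degree ?H v \<le> 2" for v by (meson le_trans)
  have ends: "degree ?H v \<le> 1" if v: "v \<in> {v1, v2, v3}" for v
  proof -
    obtain d where colors: "\<forall>e\<in>?H. v \<in> e \<longrightarrow> col e \<in> {d}"
      using bspec[OF free v] unfolding free_color_def by blast
    have "degree ?H v \<le> card {d}" by (rule degree_le_card_colors[OF col _ _ colors]) auto
    then show ?thesis by simp
  qed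
  show ?thesis
    unfolding kempe_chain_def
  proof (rule component_at_most_two_ends[OF _ _ deg2])
    show "finite ?H" using fin by simp
    show "\<forall>e\<in>?H. card e = 2" using two by simp
    show "degree ?H v1 \<le> 1" "degree ?H v2 \<le> 1" "degree ?H v3 \<le> 1" using ends by simp_all
  qed (use in_chain[unfolded kempe_chain_def] distinct in simp_all)
qed

section \<open>Fans\<close>

text \<open>Y 0 is the far end of the uncoloured edge {x, Y 0}, and the spoke {x, Y (j + 1)} has
  the colour \<beta> j that is free at Y j. Moving the colour \<beta> j onto {x, Y j} for every j \<le> k
  colours {x, Y 0}, and the result is proper as soon as \<beta> k is free at x.\<close>

locale fan =
  fixes F :: "'a set set" and col :: "'a set \<Rightarrow> nat" and c :: nat
    and x :: 'a and Y :: "nat \<Rightarrow> 'a" and k :: nat and \<beta> :: "nat \<Rightarrow> nat"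
  assumes finite_edges: "finite F"
    and card_edges: "\<forall>e\<in>F. card e = 2"
    and coloring: "edge_coloring F col c"
    and inj_Y: "inj_on Y {0..k}"
    and Y_neq_center: "\<And>j. j \<le> k \<Longrightarrow> Y j \<noteq> x"
    and spoke: "\<And>j. j < k \<Longrightarrow> {x, Y (Suc j)} \<in> F \<and> col {x, Y (Suc j)} = \<beta> j"
    and free_at_Y: "\<And>j. j \<le> k \<Longrightarrow> free_color F col (Y j) (\<beta> j) \<and> \<beta> j < c"
begin

lemma spoke_eq_iff:
  assumes "i \<le> k" "j \<le> k"
  shows "{x, Y i} = {x, Y j} \<longleftrightarrow> i = j"
proof
  assume "{x, Y i} = {x, Y j}"
  then have "Y i = Y j" using Y_neq_center[OF assms(1)] by (auto simp: doubleton_eq_iff)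
  then show "i = j" using inj_onD[OF inj_Y] assms by simp
qed simp

lemma spoke_colors_distinct:
  assumes "i < k" "j < k" "i \<noteq> j"
  shows "\<beta> i \<noteq> \<beta> j"
proof
  assume "\<beta> i = \<beta> j"
  then have "{x, Y (Suc i)} = {x, Y (Suc j)}"
    using edge_coloring_eq[OF coloring, of "{x, Y (Suc i)}" "{x, Y (Suc j)}" x]
      spoke[OF assms(1)] spoke[OF assms(2)] by simp
  then show False using spoke_eq_iff[of "Suc i" "Suc j"] assms by simp
qed

lemma spoke_color_not_free:
  assumes "free_color F col x b" "j < k"
  shows "\<beta> j \<noteq> b"
  using assms(1) spoke[OF assms(2)] unfolding free_color_def by auto

lemma swap_color_spoke:
  assumes "i < k" "\<beta> i = \<beta> k" "free_color F col x b" "j < k" "j \<noteq> i"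
  shows "swap_color (\<beta> k) b (\<beta> j) = \<beta> j"
  using spoke_colors_distinct[of j i] spoke_color_not_free[OF assms(3,4)] assms
  unfolding swap_color_def by auto

definition shifted :: "'a set \<Rightarrow> nat" where
  "shifted e = (if \<exists>j\<le>k. e = {x, Y j} then \<beta> (THE j. j \<le> k \<and> e = {x, Y j}) else col e)"

lemma shifted_spoke:
  assumes "j \<le> k"
  shows "shifted {x, Y j} = \<beta> j"
proof -
  have "(THE i. i \<le> k \<and> {x, Y j} = {x, Y i}) = j"
    using assms spoke_eq_iff by (intro the_equality) auto
  then show ?thesis unfolding shifted_def using assms by auto
qed

lemma shifted_spoke_neq:
  assumes free_x: "free_color F col x (\<beta> k)" and i: "i \<le> k"
    and f: "f \<in> insert {x, Y 0} F" "f \<noteq> {x, Y i}" "f \<inter> {x, Y i} \<noteq> {}"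
  shows "shifted f \<noteq> \<beta> i"
proof (cases "\<exists>j\<le>k. f = {x, Y j}")
  case True
  then obtain j where j: "j \<le> k" "f = {x, Y j}" by blast
  with f(2) have "i \<noteq> j" by blast
  have "\<beta> j \<noteq> \<beta> i"
  proof (cases "i = k \<or> j = k")
    case True
    then consider "i = k" "j < k" | "j = k" "i < k" using i j(1) \<open>i \<noteq> j\<close> by linarith
    then show ?thesis
    proof cases
      case 1
      then show ?thesis using spoke_color_not_free[OF free_x, of j] by simp
    next
      case 2
      then show ?thesis using spoke_color_not_free[OF free_x, of i] by simp
    qed
  next
    case False
    then show ?thesis using spoke_colors_distinct[of j i] i j(1) \<open>i \<noteq> j\<close> by simp
  qed
  then show ?thesis using shifted_spoke[OF j(1)] j(2) by simp
next
  case no_spoke: False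
  have fF: "f \<in> F" using f(1) no_spoke by auto
  have shifted_f: "shifted f = col f" using no_spoke unfolding shifted_def by auto
  consider "Y i \<in> f" | "x \<in> f" using f(3) by blast
  then show ?thesis
  proof cases
    case 1
    then show ?thesis using free_at_Y[OF i] fF shifted_f unfolding free_color_def by auto
  next
    case 2
    show ?thesis
    proof (cases "i = k")
      case True
      then show ?thesis using free_x fF 2 shifted_f unfolding free_color_def by auto
    next
      case False
      with i have "i < k" by simp
      then have "f \<noteq> {x, Y (Suc i)}" using no_spoke Suc_leI by blast
      then have "col f \<noteq> col {x, Y (Suc i)}"
        using edge_coloring_eq[OF coloring fF conjunct1[OF spoke[OF \<open>i < k\<close>]] 2] by auto
      then show ?thesis using spoke[OF \<open>i < k\<close>] shifted_f by simp
    qed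
  qed
qed

lemma edge_coloring_shifted:
  assumes free_x: "free_color F col x (\<beta> k)"
  shows "edge_coloring (insert {x, Y 0} F) shifted c"
  unfolding edge_coloring_def
proof (intro conjI ballI impI)
  fix e assume e: "e \<in> insert {x, Y 0} F"
  show "shifted e < c"
  proof (cases "\<exists>j\<le>k. e = {x, Y j}")
    case True
    then show ?thesis using shifted_spoke free_at_Y by auto
  next
    case False
    then have "e \<in> F" "shifted e = col e" using e unfolding shifted_def by auto
    then show ?thesis using coloring unfolding edge_coloring_def by simp
  qed
next
  fix e f assume ef: "e \<in> insert {x, Y 0} F" "f \<in> insert {x, Y 0} F" "e \<noteq> f" "e \<inter> f \<noteq> {}"
  consider (e_spoke) i where "i \<le> k" "e = {x, Y i}" | (f_spoke) i where "i \<le> k" "f = {x, Y i}"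
    | (neither) "\<nexists>j. j \<le> k \<and> e = {x, Y j}" "\<nexists>j. j \<le> k \<and> f = {x, Y j}"
    by blast
  then show "shifted e \<noteq> shifted f"
  proof cases
    case e_spoke
    with ef(3,4) have "f \<noteq> {x, Y i}" "f \<inter> {x, Y i} \<noteq> {}" by auto
    then show ?thesis
      using shifted_spoke_neq[OF free_x e_spoke(1) ef(2)] shifted_spoke[OF e_spoke(1)] e_spoke(2)
      by auto
  next
    case f_spoke
    with ef(3,4) have "e \<noteq> {x, Y i}" "e \<inter> {x, Y i} \<noteq> {}" by auto
    then show ?thesis
      using shifted_spoke_neq[OF free_x f_spoke(1) ef(1)] shifted_spoke[OF f_spoke(1)] f_spoke(2)
      by auto
  next
    case neither
    then have "e \<in> F" "f \<in> F" "shifted e = col e" "shifted f = col f"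
      using ef(1,2) unfolding shifted_def by auto
    then show ?thesis using coloring ef(3,4) unfolding edge_coloring_def by auto
  qed
qed

text \<open>If the colour \<beta> k free at the last leaf is not free at x, it is the colour \<beta> i of an
  earlier spoke. Let b be free at x and swap \<beta> k and b on a Kempe chain. If Y i is not on the
  chain through x, swapping that chain frees \<beta> i at x, and the fan up to Y i can be shifted.
  Otherwise the chain is a path with ends x and Y i, so it misses Y k; swapping the chain through
  Y k frees b at Y k, and the whole fan can be shifted with b as the last colour.\<close>

lemma kempe_recolor_truncated:
  assumes i: "i < k" "\<beta> i = \<beta> k" and b: "b < c" "free_color F col x b"
    and outside: "Y i \<notin> kempe_chain F col (\<beta> k) b x"
  shows "\<exists>col'. edge_coloring (insert {x, Y 0} F) col' c"
proof -
  let ?col = "kempe_swap F col (\<beta> k) b x"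
  have x_in: "x \<in> kempe_chain F col (\<beta> k) b x" unfolding kempe_chain_def by (rule component_refl)
  interpret truncated: fan F ?col c x Y i \<beta>
  proof
    show "finite F" by (rule finite_edges)
    show "\<forall>e\<in>F. card e = 2" by (rule card_edges)
    show "edge_coloring F ?col c"
      using edge_coloring_kempe_swap[OF card_edges coloring _ b(1)] free_at_Y[of k] by simp
    show "inj_on Y {0..i}" by (rule inj_on_subset[OF inj_Y]) (use i in auto)
    show "Y j \<noteq> x" if "j \<le> i" for j using Y_neq_center that i(1) by simp
    show "{x, Y (Suc j)} \<in> F \<and> ?col {x, Y (Suc j)} = \<beta> j" if "j < i" for j
      using kempe_swap_inside[OF card_edges x_in, of "{x, Y (Suc j)}"] spoke[of j]
        swap_color_spoke[OF i b(2), of j] that i(1) by simp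
    show "free_color F ?col (Y j) (\<beta> j) \<and> \<beta> j < c" if j: "j \<le> i" for j
    proof -
      have "free_color F ?col (Y j) (\<beta> j) \<longleftrightarrow> free_color F col (Y j) (\<beta> j)"
      proof (cases "Y j \<in> kempe_chain F col (\<beta> k) b x")
        case True
        with outside have "j \<noteq> i" by auto
        then show ?thesis
          using free_color_kempe_swap_inside[OF card_edges True] swap_color_spoke[OF i b(2), of j] j i(1)
          by simp
      next
        case False
        then show ?thesis by (rule free_color_kempe_swap_outside)
      qed
      then show ?thesis using free_at_Y[of j] j i(1) by simp
    qed
  qed
  have "free_color F ?col x (\<beta> i)"
    using free_color_kempe_swap_inside[OF card_edges x_in] b(2) i(2) by (simp add: swap_color_def)
  then show ?thesis using truncated.edge_coloring_shifted by blast
qed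

lemma kempe_chain_last_leaf:
  assumes i: "i < k" "\<beta> i = \<beta> k" and b: "free_color F col x b"
    and inside: "Y i \<in> kempe_chain F col (\<beta> k) b x"
  shows "x \<notin> kempe_chain F col (\<beta> k) b (Y k)" "Y i \<notin> kempe_chain F col (\<beta> k) b (Y k)"
proof -
  let ?chain = "kempe_chain F col (\<beta> k) b"
  have "Y k \<notin> ?chain x"
  proof (rule kempe_chain_at_most_two_ends[OF finite_edges card_edges coloring _ inside])
    show "x \<in> ?chain x" unfolding kempe_chain_def by (rule component_refl)
    show "x \<noteq> Y i" "x \<noteq> Y k" using Y_neq_center[of i] Y_neq_center[of k] i(1) by auto
    show "Y i \<noteq> Y k" using inj_onD[OF inj_Y, of i k] i(1) by auto
    show "\<forall>v\<in>{x, Y i, Y k}. free_color F col v (\<beta> k) \<or> free_color F col v b"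
      using b free_at_Y[of i] free_at_Y[of k] i by auto
  qed
  show "x \<notin> ?chain (Y k)"
  proof
    assume "x \<in> ?chain (Y k)"
    then have "Y k \<in> ?chain x" unfolding kempe_chain_def by (rule component_sym)
    with \<open>Y k \<notin> ?chain x\<close> show False by contradiction
  qed
  show "Y i \<notin> ?chain (Y k)"
  proof
    assume "Y i \<in> ?chain (Y k)"
    then have "Y k \<in> ?chain (Y i)" unfolding kempe_chain_def by (rule component_sym)
    then have "Y k \<in> ?chain x"
      using component_trans[OF inside[unfolded kempe_chain_def]] unfolding kempe_chain_def by simp
    with \<open>Y k \<notin> ?chain x\<close> show False by contradiction
  qed
qed

lemma kempe_recolor_full:
  assumes i: "i < k" "\<beta> i = \<beta> k" and b: "b < c" "free_color F col x b"
    and inside: "Y i \<in> kempe_chain F col (\<beta> k) b x"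
  shows "\<exists>col'. edge_coloring (insert {x, Y 0} F) col' c"
proof -
  let ?chain = "kempe_chain F col (\<beta> k) b"
  note x_out = kempe_chain_last_leaf(1)[OF i b(2) inside]
    and i_out = kempe_chain_last_leaf(2)[OF i b(2) inside]
  let ?col = "kempe_swap F col (\<beta> k) b (Y k)"
  have k_in: "Y k \<in> ?chain (Y k)" unfolding kempe_chain_def by (rule component_refl)
  interpret swapped: fan F ?col c x Y k "\<beta>(k := b)"
  proof
    show "finite F" by (rule finite_edges)
    show "\<forall>e\<in>F. card e = 2" by (rule card_edges)
    show "edge_coloring F ?col c"
      using edge_coloring_kempe_swap[OF card_edges coloring _ b(1)] free_at_Y[of k] by simp
    show "inj_on Y {0..k}" by (rule inj_Y)
    show "Y j \<noteq> x" if "j \<le> k" for j using Y_neq_center that by simp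
    show "{x, Y (Suc j)} \<in> F \<and> ?col {x, Y (Suc j)} = (\<beta>(k := b)) j" if "j < k" for j
      using kempe_swap_outside[OF x_out, of "{x, Y (Suc j)}"] spoke[OF that] that by simp
    show "free_color F ?col (Y j) ((\<beta>(k := b)) j) \<and> (\<beta>(k := b)) j < c" if j: "j \<le> k" for j
    proof (cases "j = k")
      case True
      then show ?thesis
        using free_color_kempe_swap_inside[OF card_edges k_in] free_at_Y[of k] b(1)
        by (simp add: swap_color_def)
    next
      case False
      with j have "j < k" by simp
      have "free_color F ?col (Y j) (\<beta> j) \<longleftrightarrow> free_color F col (Y j) (\<beta> j)"
      proof (cases "Y j \<in> ?chain (Y k)")
        case True
        with i_out have "j \<noteq> i" by auto
        then show ?thesis
          using free_color_kempe_swap_inside[OF card_edges True] swap_color_spoke[OF i b(2) \<open>j < k\<close>]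
          by simp
      next
        case False
        then show ?thesis by (rule free_color_kempe_swap_outside)
      qed
      then show ?thesis using free_at_Y[OF j] False by simp
    qed
  qed
  have "free_color F ?col x b" using free_color_kempe_swap_outside[OF x_out] b(2) by simp
  then show ?thesis using swapped.edge_coloring_shifted by auto
qed

end

section \<open>Vizing's theorem\<close>

lemma finite_range_repeats:
  fixes Y :: "nat \<Rightarrow> 'a"
  assumes "finite (range Y)"
  shows "\<exists>n. \<exists>i\<le>n. Y (Suc n) = Y i"
proof -
  have repeat: "\<exists>n. \<exists>i'\<le>n. Y (Suc n) = Y i'" if eq: "Y i = Y j" and lt: "i < j" for i j
  proof -
    obtain n where "j = Suc n" using lt by (cases j) auto
    then show ?thesis using eq lt by (intro exI[of _ n] exI[of _ i]) auto
  qed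
  have "\<not> inj Y" using assms finite_imageD infinite_UNIV_nat by blast
  then obtain i j where "Y i = Y j" "i \<noteq> j" unfolding inj_def by blast
  then show ?thesis using repeat[of i j] repeat[of j i] by (cases i j rule: linorder_cases) auto
qed

lemma sequence_stops:
  fixes Y :: "nat \<Rightarrow> 'a"
  assumes "finite A" "\<And>n. \<not> P n \<Longrightarrow> Y (Suc n) \<in> A"
  shows "\<exists>n. P n \<or> (\<exists>i\<le>n. Y (Suc n) = Y i)"
proof (rule ccontr)
  assume never: "\<not> ?thesis"
  have "Y n \<in> insert (Y 0) A" for n
    using assms(2) never by (cases n) auto
  then have "range Y \<subseteq> insert (Y 0) A" by blast
  then have "finite (range Y)" by (rule finite_subset) (use assms(1) in simp)
  then show False using finite_range_repeats never by blast
qed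

lemma inj_on_if_no_repeat:
  fixes Y :: "nat \<Rightarrow> 'a"
  assumes "\<And>n i. n < k \<Longrightarrow> i \<le> n \<Longrightarrow> Y (Suc n) \<noteq> Y i"
  shows "inj_on Y {0..k}"
proof (rule inj_onI)
  have neq: "Y i \<noteq> Y j" if "i < j" "j \<le> k" for i j
    using assms[of "j - 1" i] that by (cases j) auto
  fix i j assume "i \<in> {0..k}" "j \<in> {0..k}" "Y i = Y j"
  then show "i = j" using neq[of i j] neq[of j i] by (cases i j rule: linorder_cases) auto
qed

text \<open>The fan is grown greedily: the next spoke is the edge at x coloured with the colour
  free at the current leaf. Growth stops when that colour is also free at x, or when the
  edge leads back to an earlier leaf.\<close>

lemma maximal_fan_exists:
  assumes fin: "finite F" and two: "\<forall>e\<in>F. card e = 2" and col: "edge_coloring F col c"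
    and "x \<noteq> y0" and \<alpha>: "\<And>v. \<alpha> v < c \<and> free_color F col v (\<alpha> v)"
  obtains Y k where "Y 0 = y0" "fan F col c x Y k (\<alpha> \<circ> Y)"
    "free_color F col x (\<alpha> (Y k)) \<or> (\<exists>i\<le>k. {x, Y i} \<in> F \<and> col {x, Y i} = \<alpha> (Y k))"
proof -
  define next_leaf where "next_leaf y = (SOME z. {x, z} \<in> F \<and> col {x, z} = \<alpha> y)" for y
  have next_leaf: "{x, next_leaf y} \<in> F \<and> col {x, next_leaf y} = \<alpha> y"
    if "\<not> free_color F col x (\<alpha> y)" for y
    unfolding next_leaf_def using edge_with_color_at[OF two that] by (rule someI_ex)
  define Y where "Y = rec_nat y0 (\<lambda>_. next_leaf)"
  have Y_0: "Y 0 = y0" and Y_Suc: "Y (Suc n) = next_leaf (Y n)" for n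
    unfolding Y_def by simp_all
  define stop where
    "stop n \<longleftrightarrow> free_color F col x (\<alpha> (Y n)) \<or> (\<exists>i\<le>n. Y (Suc n) = Y i)" for n
  have "Y (Suc n) \<in> \<Union>F" if "\<not> free_color F col x (\<alpha> (Y n))" for n
    using next_leaf[OF that] Y_Suc[of n] by blast
  then have "\<exists>n. stop n"
    unfolding stop_def by (rule sequence_stops[OF finite_Union_card_2[OF fin two]])
  define k where "k = (LEAST n. stop n)"
  have stop_k: "stop k" unfolding k_def using \<open>\<exists>n. stop n\<close> by (rule LeastI_ex)
  have not_stop: "\<not> stop n" if "n < k" for n using that unfolding k_def by (rule not_less_Least)
  have spoke: "{x, Y (Suc j)} \<in> F \<and> col {x, Y (Suc j)} = \<alpha> (Y j)" if "j < k" for j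
    using not_stop[OF that] next_leaf Y_Suc unfolding stop_def by auto
  have "fan F col c x Y k (\<alpha> \<circ> Y)"
  proof
    show "finite F" by (rule fin)
    show "\<forall>e\<in>F. card e = 2" by (rule two)
    show "edge_coloring F col c" by (rule col)
    show "inj_on Y {0..k}"
      by (rule inj_on_if_no_repeat) (use not_stop in \<open>auto simp: stop_def\<close>)
    show "Y j \<noteq> x" if "j \<le> k" for j
    proof (cases j)
      case 0
      then show ?thesis using Y_0 \<open>x \<noteq> y0\<close> by simp
    next
      case (Suc i)
      then have "card {x, Y j} = 2" using two spoke[of i] that by auto
      then show ?thesis by auto
    qed
    show "{x, Y (Suc j)} \<in> F \<and> col {x, Y (Suc j)} = (\<alpha> \<circ> Y) j" if "j < k" for j
      using spoke[OF that] by simp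
    show "free_color F col (Y j) ((\<alpha> \<circ> Y) j) \<and> (\<alpha> \<circ> Y) j < c" if "j \<le> k" for j
      using \<alpha> by simp
  qed
  moreover have
    "free_color F col x (\<alpha> (Y k)) \<or> (\<exists>i\<le>k. {x, Y i} \<in> F \<and> col {x, Y i} = \<alpha> (Y k))"
  proof (cases "free_color F col x (\<alpha> (Y k))")
    case False
    then obtain i where "i \<le> k" "Y (Suc k) = Y i" using stop_k unfolding stop_def by blast
    then show ?thesis using next_leaf[OF False] Y_Suc[of k] by auto
  qed simp
  ultimately show ?thesis using that Y_0 by blast
qed

lemma edge_coloring_insert:
  assumes fin: "finite F" and two: "\<forall>e\<in>insert g F. card e = 2" and "g \<notin> F"
    and deg: "\<And>v. degree (insert g F) v \<le> D" and col: "edge_coloring F col (Suc D)"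
  shows "\<exists>col'. edge_coloring (insert g F) col' (Suc D)"
proof -
  have two_F: "\<forall>e\<in>F. card e = 2" using two by blast
  have "\<exists>x y0. g = {x, y0} \<and> x \<noteq> y0" using bspec[OF two insertI1] unfolding card_2_iff .
  then obtain x y0 where g: "g = {x, y0}" "x \<noteq> y0" by blast
  have free: "\<exists>a<Suc D. free_color F col v a" for v
  proof -
    have "degree F v \<le> degree (insert g F) v" by (rule degree_mono) (use fin in auto)
    then have "degree F v < Suc D" using deg[of v] by simp
    then show ?thesis by (rule free_color_exists[OF fin])
  qed
  define \<alpha> where "\<alpha> v = (SOME a. a < Suc D \<and> free_color F col v a)" for v
  have \<alpha>: "\<alpha> v < Suc D \<and> free_color F col v (\<alpha> v)" for v
    unfolding \<alpha>_def using someI_ex[OF free[of v]] by simp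
  obtain Y k where Y_0: "Y 0 = y0" and fan: "fan F col (Suc D) x Y k (\<alpha> \<circ> Y)"
    and ends:
      "free_color F col x (\<alpha> (Y k)) \<or> (\<exists>i\<le>k. {x, Y i} \<in> F \<and> col {x, Y i} = \<alpha> (Y k))"
    by (rule maximal_fan_exists[OF fin two_F col g(2) \<alpha>])
  interpret fan F col "Suc D" x Y k "\<alpha> \<circ> Y" by (rule fan)
  from ends have "\<exists>col'. edge_coloring (insert {x, Y 0} F) col' (Suc D)"
  proof
    assume "free_color F col x (\<alpha> (Y k))"
    then have "free_color F col x ((\<alpha> \<circ> Y) k)" by simp
    then show ?thesis using edge_coloring_shifted by blast
  next
    assume "\<exists>i\<le>k. {x, Y i} \<in> F \<and> col {x, Y i} = \<alpha> (Y k)"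
    then obtain i where i: "i \<le> k" "{x, Y i} \<in> F" "col {x, Y i} = \<alpha> (Y k)" by blast
    obtain j where j: "i = Suc j" using i(2) \<open>g \<notin> F\<close> g Y_0 by (cases i) auto
    then have jk: "j < k" "(\<alpha> \<circ> Y) j = (\<alpha> \<circ> Y) k" using i spoke[of j] by auto
    obtain b where b: "b < Suc D" "free_color F col x b" using free by blast
    show ?thesis
    proof (cases "Y j \<in> kempe_chain F col ((\<alpha> \<circ> Y) k) b x")
      case True
      then show ?thesis by (rule kempe_recolor_full[OF jk b])
    next
      case False
      then show ?thesis by (rule kempe_recolor_truncated[OF jk b])
    qed
  qed
  then show ?thesis using g Y_0 by simp
qed

theorem vizing:
  assumes "finite E" "\<forall>e\<in>E. card e = 2" "\<And>v. degree E v \<le> D"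
  shows "\<exists>col. edge_coloring E col (Suc D)"
  using assms
proof (induction E rule: finite_induct)
  case empty
  then show ?case unfolding edge_coloring_def by simp
next
  case (insert g F)
  have deg_F: "degree F v \<le> D" for v
  proof -
    have "degree F v \<le> degree (insert g F) v" by (rule degree_mono) (use insert.hyps in auto)
    then show ?thesis using insert.prems(2)[of v] by simp
  qed
  have two_F: "\<forall>e\<in>F. card e = 2" using insert.prems(1) by blast
  obtain col where "edge_coloring F col (Suc D)" using insert.IH[OF two_F deg_F] by blast
  then show ?case
    using edge_coloring_insert[OF insert.hyps(1) insert.prems(1) insert.hyps(2) insert.prems(2)]
    by blast
qed

section \<open>Removing colour classes\<close>

lemma mean_bound_step:
  fixes j N c S a X :: nat
  assumes "j * N \<le> c * S" "N \<le> S + a * X" "c = j + a" "0 < a"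
  shows "(j + 1) * N \<le> c * (S + X)"
proof -
  obtain b where a: "a = Suc b" using assms(4) by (cases a) auto
  have "a * ((j + 1) * N) = b * (j * N) + c * N" using assms(3) a by (simp add: algebra_simps)
  also have "\<dots> \<le> b * (c * S) + (c * S + c * (a * X))"
  proof (rule add_mono)
    show "b * (j * N) \<le> b * (c * S)" using assms(1) by (rule mult_le_mono2)
    show "c * N \<le> c * S + c * (a * X)"
      using mult_le_mono2[OF assms(2), of c] by (simp add: add_mult_distrib2)
  qed
  also have "\<dots> = a * (c * (S + X))" using a by (simp add: algebra_simps)
  finally show ?thesis using assms(4) by simp
qed

text \<open>Take a set J of maximum size among those of total weight at most k whose mean weight
  is at least the overall mean, and a heaviest i outside J. If J \<union> {i} still weighed at
  most k, it would again be such a set, because i weighs at least the mean outside J.\<close>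

lemma threshold_subset_above_mean:
  fixes s :: "'i \<Rightarrow> nat"
  assumes fin: "finite I" and k: "k < sum s I"
  obtains J i where "J \<subseteq> I" "i \<in> I - J" "sum s J \<le> k" "k \<le> sum s J + s i"
    "card J * sum s I \<le> card I * sum s J"
proof -
  define good where
    "good J \<longleftrightarrow> J \<subseteq> I \<and> sum s J \<le> k \<and> card J * sum s I \<le> card I * sum s J" for J
  have "good {}" unfolding good_def by simp
  moreover have "\<forall>J. good J \<longrightarrow> card J < Suc (card I)"
    using card_mono[OF fin] unfolding good_def by (simp add: less_Suc_eq_le)
  ultimately have "\<exists>J. good J \<and> (\<forall>J'. good J' \<longrightarrow> card J' \<le> card J)"
    by (rule ex_has_greatest_nat)
  then obtain J where J: "good J" and J_max: "\<And>J'. good J' \<Longrightarrow> card J' \<le> card J" by blast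
  have JI: "J \<subseteq> I" "sum s J \<le> k" "card J * sum s I \<le> card I * sum s J"
    using J unfolding good_def by auto
  have finJ: "finite J" using finite_subset[OF JI(1) fin] .
  have finR: "finite (I - J)" using fin by simp
  have split: "sum s I = sum s J + sum s (I - J)" using sum.subset_diff[OF JI(1) fin, of s] by linarith
  have "I - J \<noteq> {}"
  proof
    assume "I - J = {}"
    then have "sum s (I - J) = 0" by (simp only: sum.empty)
    then show False using split JI(2) k by linarith
  qed
  have "Max (s ` (I - J)) \<in> s ` (I - J)"
    by (rule Max_in) (use finR \<open>I - J \<noteq> {}\<close> in auto)
  then obtain i where i: "i \<in> I - J" "Max (s ` (I - J)) = s i" by blast
  have i_max: "s i' \<le> s i" if i': "i' \<in> I - J" for i'
  proof -
    have "s i' \<le> Max (s ` (I - J))" by (rule Max_ge) (use finR i' in auto)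
    then show ?thesis using i(2) by simp
  qed
  show ?thesis
  proof (cases "k \<le> sum s J + s i")
    case True
    then show ?thesis using that JI i(1) by blast
  next
    case False
    have "sum s (I - J) \<le> card (I - J) * s i" using sum_bounded_above[of "I - J" s "s i"] i_max by simp
    then have "sum s I \<le> sum s J + card (I - J) * s i" using split by simp
    moreover have "card I = card J + card (I - J)"
      using card_Diff_subset[OF finJ JI(1)] card_mono[OF fin JI(1)] by arith
    moreover have "0 < card (I - J)" using finR \<open>I - J \<noteq> {}\<close> by (simp add: card_gt_0_iff)
    ultimately have "(card J + 1) * sum s I \<le> card I * (sum s J + s i)"
      by (rule mean_bound_step[OF JI(3)])
    then have "good (insert i J)"
      using False JI(1) i(1) finJ unfolding good_def by (auto simp: add.commute)
    then show ?thesis using J_max[of "insert i J"] finJ i(1) by simp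
  qed
qed

lemma real_le_mult_ratio:
  fixes j c n m :: nat
  assumes "j * n \<le> c * (n - m)" "m \<le> n" "0 < n"
  shows "real j \<le> real c * ((real n - real m) / real n)"
proof -
  have "real (j * n) \<le> real (c * (n - m))" using assms(1) by (simp only: of_nat_le_iff)
  then have "real j * real n \<le> real c * (real n - real m)" using assms(2) by (simp add: of_nat_diff)
  then show ?thesis using assms(3) by (simp add: field_simps)
qed

lemma edge_coloring_remove_classes:
  assumes fin: "finite E" and col: "edge_coloring E col c" and k: "k < card E"
  obtains R j where "R \<subseteq> E" "card R = k" "j \<le> c" "j * card E \<le> c * k"
    "\<And>v. degree R v \<le> j + 1" "\<And>v. degree (E - R) v \<le> c - j"
proof -
  define C where "C i = {e\<in>E. col e = i}" for i
  have finC: "finite (C i)" for i unfolding C_def using fin by simp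
  have card_UN: "card (\<Union>i\<in>J. C i) = (\<Sum>i\<in>J. card (C i))" if "finite J" for J
    using that finC by (intro card_UN_disjoint) (auto simp: C_def)
  have "E = (\<Union>i\<in>{0..<c}. C i)" using col unfolding C_def edge_coloring_def by auto
  then have "k < (\<Sum>i\<in>{0..<c}. card (C i))" using card_UN[of "{0..<c}"] k by simp
  then obtain J i where J: "J \<subseteq> {0..<c}" "i \<in> {0..<c} - J"
    and S_le: "(\<Sum>i\<in>J. card (C i)) \<le> k" "k \<le> (\<Sum>i\<in>J. card (C i)) + card (C i)"
    and mean: "card J * (\<Sum>i\<in>{0..<c}. card (C i)) \<le> card {0..<c} * (\<Sum>i\<in>J. card (C i))"
    by (rule threshold_subset_above_mean[OF finite_atLeastLessThan])
  have finJ: "finite J" using finite_subset[OF J(1)] by simp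
  have SJ: "(\<Sum>i\<in>J. card (C i)) = card (\<Union>j\<in>J. C j)" using card_UN[OF finJ] by simp
  have "k - card (\<Union>j\<in>J. C j) \<le> card (C i)" using S_le(2) SJ by simp
  then obtain P where P: "P \<subseteq> C i" "card P = k - card (\<Union>j\<in>J. C j)" "finite P"
    by (rule obtain_subset_with_card_n)
  define R where "R = (\<Union>j\<in>J. C j) \<union> P"
  show ?thesis
  proof (rule that)
    show "R \<subseteq> E" using P(1) unfolding R_def C_def by auto
    have "(\<Union>j\<in>J. C j) \<inter> P = {}" using P(1) J(2) unfolding C_def by auto
    then show "card R = k"
      unfolding R_def using P(2,3) S_le(1) SJ finJ finC by (simp add: card_Un_disjoint)
    show "card J \<le> c" using card_mono[OF _ J(1)] by simp
    show "card J * card E \<le> c * k"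
      using mean \<open>E = (\<Union>i\<in>{0..<c}. C i)\<close> card_UN[of "{0..<c}"] S_le(1) mult_le_mono2[of _ k c]
      by (simp add: le_trans)
    fix v
    have "degree (\<Union>j\<in>J. C j) v \<le> card J"
      by (rule degree_le_card_colors[OF col]) (use finJ in \<open>auto simp: C_def\<close>)
    moreover have "degree P v \<le> card {i}"
      by (rule degree_le_card_colors[OF col]) (use P(1) in \<open>auto simp: C_def\<close>)
    ultimately show "degree R v \<le> card J + 1"
      unfolding R_def using degree_Un_le[of "\<Union>j\<in>J. C j" P v] by simp
    have "degree (E - R) v \<le> card ({0..<c} - J)"
      by (rule degree_le_card_colors[OF col])
        (use col in \<open>auto simp: R_def C_def edge_coloring_def\<close>)
    then show "degree (E - R) v \<le> c - card J"
      using card_Diff_subset[OF finJ J(1)] by simp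
  qed
qed

theorem lemma4p1:
  fixes V :: "'a set" and E :: "'a set set" and m :: nat
  assumes "graph V E"
    and "E \<noteq> {}"
    and "0 < m" and "m \<le> card E"
  shows "\<exists>E'. E' \<subseteq> E \<and> card E' = m \<and>
     int (max_degree V E') - int (min_degree V E')
       \<le> int (max_degree V E) - int (min_degree V E) + 2 \<and>
     real (max_degree V (E - E'))
       \<le> (real (max_degree V E) + 1) * ((real (card E) - real m) / real (card E)) + 1"
proof -
  let ?\<Delta> = "max_degree V E" and ?\<delta> = "min_degree V E"
  have edges: "\<forall>e\<in>E. e \<subseteq> V \<and> card e = 2" using assms(1) unfolding graph_def by auto
  have finE: "finite E" using graph_finite_edges[OF assms(1)] .
  obtain e where "e \<in> E" using assms(2) by blast
  then have V: "finite V" "V \<noteq> {}" using assms(1) edges unfolding graph_def by force+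
  obtain col where col: "edge_coloring E col (Suc ?\<Delta>)"
    using vizing[OF finE] edges degree_le_max_degree[OF assms(1)] by blast
  have "card E - m < card E" using assms(3,4) by simp
  then obtain R j where R: "R \<subseteq> E" "card R = card E - m" "j \<le> Suc ?\<Delta>"
    "j * card E \<le> Suc ?\<Delta> * (card E - m)"
    and deg_R: "\<And>v. degree R v \<le> j + 1" and deg_rest: "\<And>v. degree (E - R) v \<le> Suc ?\<Delta> - j"
    using edge_coloring_remove_classes[OF finE col] by blast
  have "max_degree V (E - R) \<le> Suc ?\<Delta> - j" by (rule max_degree_le[OF V deg_rest])
  moreover have "?\<delta> - (j + 1) \<le> min_degree V (E - R)"
    by (rule min_degree_Diff_ge[OF V R(1) finE deg_R])
  ultimately have S1:
    "int (max_degree V (E - R)) - int (min_degree V (E - R)) \<le> int ?\<Delta> - int ?\<delta> + 2"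
    using R(3) by linarith
  have "max_degree V (E - (E - R)) \<le> j + 1"
    using max_degree_le[OF V deg_R] R(1) by (simp add: Diff_Diff_Int Int_absorb1)
  then have "real (max_degree V (E - (E - R))) \<le> real j + 1" by simp
  moreover have "real j \<le> (real ?\<Delta> + 1) * ((real (card E) - real m) / real (card E))"
    using real_le_mult_ratio[OF R(4) assms(4)] finE assms(2) by (simp add: card_gt_0_iff add.commute)
  ultimately have S2: "real (max_degree V (E - (E - R)))
      \<le> (real ?\<Delta> + 1) * ((real (card E) - real m) / real (card E)) + 1" by linarith
  have "card (E - R) = m"
    using card_Diff_subset[OF finite_subset[OF R(1) finE] R(1)] R(2) assms(4) by simp
  then show ?thesis
    by (intro exI[of _ "E - R"] conjI) (use S1 S2 in auto)
qed

end
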